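(* Let $\lambda>0$, $\theta\in(0,1]$, $\lambda\theta\in(0,1]$. A function $\mathcal S$ analytic in a neighbourhood of $0$ satisfies the time-independent equation $$(2\lambda\theta z+1)\mathcal S(z)-\theta(1+2\lambda z)\mathcal S(z)^2-\frac{\theta z(1+\lambda z)}{2}\partial_z[\mathcal S^2](z)=0$$ if and only if either $\mathcal S\equiv0$ or $\mathcal S(z)=\dfrac{\lambda\theta z+1}{\lambda\theta z+\theta}$. Moreover, this nonzero solution equals $S_Q(\lambda\theta z)$, where $S_Q$ is the $S$ transform of an orthogonal projection $Q$ with $\tau(Q)=\theta$ in $(\mathcal A,\tau)$, and it coincides with the $S$ transform of $PQP$ viewed in the compressed space $(P\mathcal AP,\tau/\tau(P))$, where $P,Q$ are free orthogonal projections with $\tau(P)=\lambda\theta$, $\tau(Q)=\theta$.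
   Context: For a non-degenerate element with moment generating function $\mathcal M(z)=\sum_{n\ge0}m_nz^n$ ($m_1\ne0$), its $S$ transform is $\mathcal S(z)=\frac{1+z}{z}\eta(z)$ where $\eta$ is the local inverse near $0$ of $\mathcal M-1$ (with the removable singularity at $0$ removed). In the compressed space the moments of $PQP$ are $\tau((PQP)^n)/\tau(P)$. *)

theory Defs
  imports "HOL-Analysis.Analysis"
begin

definition star_prob_space :: "('a::real_algebra_1 \<Rightarrow> 'a) \<Rightarrow> ('a \<Rightarrow> real) \<Rightarrow> bool" where
  "star_prob_space st tau \<longleftrightarrow>
     (\<forall>a. st (st a) = a) \<and> (\<forall>a b. st (a + b) = st a + st b) \<and>
     (\<forall>r a. st (r *\<^sub>R a) = r *\<^sub>R st a) \<and> (\<forall>a b. st (a * b) = st b * st a) \<and>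
     (\<forall>a b. tau (a + b) = tau a + tau b) \<and> (\<forall>r a. tau (r *\<^sub>R a) = r * tau a) \<and>
     tau 1 = 1 \<and> (\<forall>a. tau (st a * a) \<ge> 0) \<and> (\<forall>a b. tau (a * b) = tau (b * a))"

definition orth_proj :: "('a::real_algebra_1 \<Rightarrow> 'a) \<Rightarrow> 'a \<Rightarrow> bool" where
  "orth_proj st p \<longleftrightarrow> p * p = p \<and> st p = p"

text \<open>Unital subalgebra generated by x (polynomials in x); for a self-adjoint x
  this is also the unital *-subalgebra generated by x.\<close>
definition alg_gen :: "'a::real_algebra_1 \<Rightarrow> 'a set" where
  "alg_gen x = {y. \<exists>n c. y = (\<Sum>i<n. c i *\<^sub>R x ^ i)}"

definition free_pair :: "('a::real_algebra_1 \<Rightarrow> real) \<Rightarrow> 'a \<Rightarrow> 'a \<Rightarrow> bool" where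
  "free_pair tau x y \<longleftrightarrow>
     (\<forall>n (a :: nat \<Rightarrow> 'a) (ix :: nat \<Rightarrow> bool). n \<ge> 1 \<longrightarrow>
        (\<forall>k<n. a k \<in> (if ix k then alg_gen x else alg_gen y) \<and> tau (a k) = 0) \<longrightarrow>
        (\<forall>k. Suc k < n \<longrightarrow> ix k \<noteq> ix (Suc k)) \<longrightarrow>
        tau (prod_list (map a [0..<n])) = 0)"

text \<open>S transform of a moment sequence m (m 0 = 1): S(w) = (1+w)/w * eta(w), where eta is
  the continuous local inverse near 0 of M - 1 with eta 0 = 0, M(z) = sum m_n z^n,
  and the removable singularity at 0 removed (S continuous at 0).\<close>
definition is_S_transform :: "(nat \<Rightarrow> complex) \<Rightarrow> (complex \<Rightarrow> complex) \<Rightarrow> bool" where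
  "is_S_transform m S \<longleftrightarrow> m 1 \<noteq> 0 \<and>
     (\<exists>r>0. \<exists>eta. eta 0 = 0 \<and> continuous_on (ball 0 r) eta \<and>
        (\<forall>w\<in>ball 0 r. (\<lambda>n. m n * eta w ^ n) sums (1 + w)) \<and>
        (\<forall>w\<in>ball 0 r. w \<noteq> 0 \<longrightarrow> S w = (1 + w) / w * eta w) \<and>
        isCont S 0)"

end

theory Submission
  imports Defs "HOL-Complex_Analysis.Complex_Analysis"
begin

(* The stationary equation factors as S times an expression linear in S.  Where S does not
   vanish, the linear factor vanishes exactly when the first integral
   theta z (1 + lam z) S(z) - z (lam theta z + 1) is locally constant; it is 0 at the origin.
   Zeros of an analytic S that is not identically 0 are isolated, so either S = 0 near 0 or
   S(z) = (lam theta z + 1) / (lam theta z + theta).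

   A projection Q with tau Q = theta has moments 1, theta, theta, ..., so M(x) = 1 + theta x / (1 - x)
   and S_Q(w) = (1 + w) / (theta + w).  For free projections P, Q with tau P = a, expand (PQ)^n P in
   the basis V_L = P q p q ... (L letters) with p = P - a, q = Q - theta: by freeness tau kills every
   V_L except V_0 = P, and P Q acts on the coordinates by a three-term recursion of Motzkin type.
   Solving it with generating functions shows that C(x) = sum_n tau((PQP)^n) / tau(P) x^n satisfies
   x C (theta + a (C - 1)) = (C - 1) (1 + a (C - 1)).  Hence w |-> w (1 + a w) / ((1 + w) (theta + a w))
   inverts C - 1 near 0, and S_PQP(w) = (1 + a w) / (theta + a w). *)

section \<open>Alternating words and freeness\<close>

fun alt_word :: "'a::monoid_mult \<Rightarrow> 'a \<Rightarrow> bool \<Rightarrow> nat \<Rightarrow> 'a" where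
  "alt_word p q b 0 = 1"
| "alt_word p q b (Suc L) = (if b then p else q) * alt_word p q (\<not> b) L"

lemma alt_word_eq_prod_list:
  "alt_word p q b L = prod_list (map (\<lambda>k. if even k = b then p else q) [0..<L])"
proof (induction L arbitrary: b)
  case (Suc L)
  have "[0..<Suc L] = 0 # map Suc [0..<L]" by (simp add: map_Suc_upt upt_conv_Cons)
  then show ?case using Suc[of "\<not> b"] by (simp add: o_def)
qed simp

declare alt_word.simps(2) [simp del]

lemma star_prob_space_linear: "star_prob_space st tau \<Longrightarrow> linear tau"
  by (rule linearI) (simp_all add: star_prob_space_def)

lemma star_prob_space_tau_1: "star_prob_space st tau \<Longrightarrow> tau 1 = 1"
  by (simp add: star_prob_space_def)

lemma centered_in_alg_gen: "x - c *\<^sub>R 1 \<in> alg_gen x"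
proof -
  have "x - c *\<^sub>R 1 = (\<Sum>i<2. (\<lambda>i. if i = 0 then -c else 1) i *\<^sub>R x ^ i)"
    by (simp add: eval_nat_numeral)
  then show ?thesis unfolding alg_gen_def by (intro CollectI exI)
qed

lemma free_pair_alt_word_centered:
  assumes sp: "star_prob_space st tau" and free: "free_pair tau x y"
  shows "tau (alt_word (x - tau x *\<^sub>R 1) (y - tau y *\<^sub>R 1) b (Suc L)) = 0"
proof -
  define ix where "ix k \<longleftrightarrow> even k = b" for k :: nat
  define w where "w k = (if ix k then x - tau x *\<^sub>R 1 else y - tau y *\<^sub>R 1)" for k
  have "tau (x - tau x *\<^sub>R 1) = 0" "tau (y - tau y *\<^sub>R 1) = 0"
    using star_prob_space_linear[OF sp] star_prob_space_tau_1[OF sp]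
    by (simp_all add: linear_diff linear_scale)
  then have "\<forall>k<Suc L. w k \<in> (if ix k then alg_gen x else alg_gen y) \<and> tau (w k) = 0"
    by (simp add: w_def centered_in_alg_gen)
  moreover have "\<forall>k. Suc k < Suc L \<longrightarrow> ix k \<noteq> ix (Suc k)" by (simp add: ix_def)
  ultimately have "tau (prod_list (map w [0..<Suc L])) = 0"
    using free[unfolded free_pair_def, rule_format, of "Suc L" w ix] by simp
  then show ?thesis by (simp only: alt_word_eq_prod_list w_def[abs_def] ix_def)
qed

section \<open>Moments of \<open>PQP\<close>\<close>

text \<open>With \<open>p = P - a\<close>, \<open>q = Q - t\<close> and the basis \<open>V\<^sub>L = P q p q \<dots>\<close> (\<open>L\<close> letters after \<open>P\<close>),
  \<open>pqp_step a t f\<close> is the coordinate vector of \<open>P Q v\<close> when \<open>v\<close> has coordinates \<open>f\<close>.\<close>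
fun pqp_step :: "real \<Rightarrow> real \<Rightarrow> (nat \<Rightarrow> real) \<Rightarrow> nat \<Rightarrow> real" where
  "pqp_step a t f 0 = t * f 0 + (a*t*(1-t)) * f 1 + (a*t*(1-a)*(1-t)) * f 2"
| "pqp_step a t f (Suc 0) = a * f 0 + (a + t - 2*a*t) * f 1 + (a*t*(1-a)*(1-t)) * f 3"
| "pqp_step a t f (Suc (Suc L)) =
     f L + (a + t - 2*a*t) * f (Suc (Suc L)) + (a*t*(1-a)*(1-t)) * f (L+4)"

primrec pqp_coeff :: "real \<Rightarrow> real \<Rightarrow> nat \<Rightarrow> nat \<Rightarrow> real" where
  "pqp_coeff a t 0 = (\<lambda>L. if L = 0 then 1 else 0)"
| "pqp_coeff a t (Suc n) = pqp_step a t (pqp_coeff a t n)"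

lemma pqp_step_add: "pqp_step a t (\<lambda>L. f L + c * g L) L = pqp_step a t f L + c * pqp_step a t g L"
  by (induction a t f L rule: pqp_step.induct) (simp_all add: algebra_simps)

lemma pqp_step_eq_0: "\<forall>L\<ge>N. f L = 0 \<Longrightarrow> L \<ge> N + 2 \<Longrightarrow> pqp_step a t f L = 0"
  by (induction a t f L rule: pqp_step.induct) simp_all

lemma pqp_coeff_eq_0: "L \<ge> 2*n + 1 \<Longrightarrow> pqp_coeff a t n L = 0"
proof (induction n arbitrary: L)
  case (Suc n)
  then show ?case using pqp_step_eq_0[of "2*n+1" "pqp_coeff a t n" L a t] by simp
qed simp

lemma sum_lessThan_delta_scaleR:
  fixes v :: "nat \<Rightarrow> 'a::real_vector"
  assumes "m < N" shows "(\<Sum>L<N. (if L = m then c else 0) *\<^sub>R v L) = c *\<^sub>R v m"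
proof -
  have "(\<Sum>L<N. (if L = m then c else 0) *\<^sub>R v L) = (\<Sum>L<N. if L = m then c *\<^sub>R v m else 0)"
    by (rule sum.cong) auto
  then show ?thesis using assms by simp
qed

locale idempotent_pair =
  fixes P Q :: "'a::real_algebra_1" and a t :: real
  assumes P_idem: "P * P = P" and Q_idem: "Q * Q = Q"
begin

abbreviation wP :: "nat \<Rightarrow> 'a" where "wP \<equiv> alt_word (P - a *\<^sub>R 1) (Q - t *\<^sub>R 1) True"
abbreviation wQ :: "nat \<Rightarrow> 'a" where "wQ \<equiv> alt_word (P - a *\<^sub>R 1) (Q - t *\<^sub>R 1) False"

definition basis :: "nat \<Rightarrow> 'a" where "basis L = P * wQ L"

lemma P_mult_wQ: "P * wQ L = a *\<^sub>R wQ L + wP (Suc L)"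
  by (simp add: alt_word.simps algebra_simps)

lemma Q_mult_wP: "Q * wP L = t *\<^sub>R wP L + wQ (Suc L)"
  by (simp add: alt_word.simps algebra_simps)

lemma Q_mult_wQ_Suc: "Q * wQ (Suc L) = (1-t) *\<^sub>R wQ (Suc L) + (t*(1-t)) *\<^sub>R wP L"
proof -
  have "Q * wQ (Suc L) = (Q * Q - t *\<^sub>R Q) * wP L" by (simp add: alt_word.simps algebra_simps)
  also have "\<dots> = (1-t) *\<^sub>R (Q * wP L)" by (simp add: Q_idem algebra_simps)
  also have "\<dots> = (1-t) *\<^sub>R (t *\<^sub>R wP L + wQ (Suc L))" by (simp only: Q_mult_wP)
  finally show ?thesis by (simp add: algebra_simps)
qed

lemma P_mult_wP_Suc: "P * wP (Suc L) = (1-a) *\<^sub>R basis L"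
proof -
  have "P * wP (Suc L) = (P * P - a *\<^sub>R P) * wQ L" by (simp add: alt_word.simps algebra_simps)
  also have "\<dots> = (1-a) *\<^sub>R basis L" by (simp add: P_idem basis_def algebra_simps)
  finally show ?thesis .
qed

lemma PQ_mult_basis:
  "P * (Q * basis L) = a *\<^sub>R (P * (Q * wQ L)) + (t*(1-a)) *\<^sub>R basis L + basis (L+2)"
proof -
  have "Q * basis L = a *\<^sub>R (Q * wQ L) + t *\<^sub>R wP (Suc L) + wQ (Suc (Suc L))"
    by (simp add: basis_def P_mult_wQ Q_mult_wP algebra_simps flip: mult.assoc)
  then have "P * (Q * basis L) = a *\<^sub>R (P * (Q * wQ L)) + t *\<^sub>R (P * wP (Suc L)) + basis (L+2)"
    by (simp add: basis_def algebra_simps)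
  then show ?thesis by (simp add: P_mult_wP_Suc)
qed

lemma PQ_eq_basis: "P * Q = t *\<^sub>R basis 0 + basis 1"
proof -
  have "P * Q = P * (Q * wP 0)" by simp
  also have "\<dots> = P * (t *\<^sub>R wP 0 + wQ (Suc 0))" by (simp only: Q_mult_wP)
  finally show ?thesis by (simp add: basis_def algebra_simps)
qed

lemma PQ_mult_wQ_Suc: "P * (Q * wQ (Suc L)) = (1-t) *\<^sub>R basis (Suc L) + (t*(1-t)) *\<^sub>R (P * wP L)"
  by (simp add: Q_mult_wQ_Suc basis_def algebra_simps)

lemma PQ_mult_basis_0: "P * (Q * basis 0) = t *\<^sub>R basis 0 + a *\<^sub>R basis 1 + basis 2"
  by (simp add: PQ_mult_basis PQ_eq_basis algebra_simps eval_nat_numeral)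

lemma PQ_mult_basis_1:
  "P * (Q * basis 1) = (a*t*(1-t)) *\<^sub>R basis 0 + (a + t - 2*a*t) *\<^sub>R basis 1 + basis 3"
proof -
  have "P * (Q * basis 1) = a *\<^sub>R ((1-t) *\<^sub>R basis 1 + (t*(1-t)) *\<^sub>R basis 0) + (t*(1-a)) *\<^sub>R basis 1 + basis 3"
    using PQ_mult_basis[of 1] PQ_mult_wQ_Suc[of 0] by (simp add: basis_def numeral_3_eq_3)
  also have "\<dots> = (a*(t*(1-t))) *\<^sub>R basis 0 + (a*(1-t) + t*(1-a)) *\<^sub>R basis 1 + basis 3"
    by (simp add: scaleR_add_left scaleR_add_right add_ac)
  also have "a*(1-t) + t*(1-a) = a + t - 2*a*t" by (simp add: algebra_simps)
  finally show ?thesis by (simp add: mult.assoc)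
qed

lemma PQ_mult_basis_Suc_Suc:
  "P * (Q * basis (Suc (Suc L))) =
     (a*t*(1-a)*(1-t)) *\<^sub>R basis L + (a + t - 2*a*t) *\<^sub>R basis (Suc (Suc L)) + basis (L+4)"
proof -
  have "P * (Q * basis (Suc (Suc L))) = a *\<^sub>R ((1-t) *\<^sub>R basis (Suc (Suc L))
      + (t*(1-t)) *\<^sub>R ((1-a) *\<^sub>R basis L)) + (t*(1-a)) *\<^sub>R basis (Suc (Suc L)) + basis (L+4)"
    using PQ_mult_basis[of "Suc (Suc L)"] PQ_mult_wQ_Suc[of "Suc L"] P_mult_wP_Suc[of L]
    by (simp add: eval_nat_numeral)
  also have "\<dots> = (a*(t*(1-t)*(1-a))) *\<^sub>R basis L + (a*(1-t) + t*(1-a)) *\<^sub>R basis (Suc (Suc L))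
      + basis (L+4)"
    by (simp add: scaleR_add_left scaleR_add_right add_ac)
  also have "a*(1-t) + t*(1-a) = a + t - 2*a*t" by (simp add: algebra_simps)
  also have "a*(t*(1-t)*(1-a)) = a*t*(1-a)*(1-t)" by (simp add: algebra_simps)
  finally show ?thesis .
qed

lemma PQ_mult_basis_eq_step:
  "P * (Q * basis N) = (\<Sum>L<N+3. pqp_step a t (\<lambda>L. if L = N then 1 else 0) L *\<^sub>R basis L)"
proof -
  consider "N = 0" | "N = 1" | M where "N = Suc (Suc M)"
    by (metis One_nat_def not0_implies_Suc)
  then show ?thesis
  proof cases
    case 1
    then show ?thesis by (simp add: PQ_mult_basis_0[unfolded numeral_2_eq_2] eval_nat_numeral)
  next
    case 2
    then show ?thesis using PQ_mult_basis_1 by (simp add: eval_nat_numeral)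
  next
    case 3
    have "pqp_step a t (\<lambda>L. if L = N then 1 else 0) L = (if L = M then a*t*(1-a)*(1-t) else 0)
        + (if L = Suc (Suc M) then a + t - 2*a*t else 0) + (if L = M+4 then 1 else 0)" for L
      using 3 by (induction a t "\<lambda>L::nat. if L = N then 1 else (0::real)" L rule: pqp_step.induct) auto
    then have "(\<Sum>L<N+3. pqp_step a t (\<lambda>L. if L = N then 1 else 0) L *\<^sub>R basis L) =
        (\<Sum>L<N+3. (if L = M then a*t*(1-a)*(1-t) else 0) *\<^sub>R basis L)
        + (\<Sum>L<N+3. (if L = Suc (Suc M) then a + t - 2*a*t else 0) *\<^sub>R basis L)
        + (\<Sum>L<N+3. (if L = M+4 then 1 else 0) *\<^sub>R basis L)"
      using 3 by (simp add: scaleR_add_left sum.distrib)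
    then show ?thesis
      using 3 by (simp add: PQ_mult_basis_Suc_Suc sum_lessThan_delta_scaleR)
  qed
qed

lemma PQ_mult_sum_basis:
  assumes "\<forall>L\<ge>N. f L = 0"
  shows "P * (Q * (\<Sum>L<N. f L *\<^sub>R basis L)) = (\<Sum>L<N+2. pqp_step a t f L *\<^sub>R basis L)"
  using assms
proof (induction N arbitrary: f)
  case 0
  then have "f = (\<lambda>_. 0)" by auto
  then show ?case by simp
next
  case (Suc N)
  define g where "g = f(N := 0)"
  have g: "\<forall>L\<ge>N. g L = 0" using Suc.prems by (auto simp: g_def)
  have step_f: "pqp_step a t f L = pqp_step a t g L + f N * pqp_step a t (\<lambda>L. if L = N then 1 else 0) L"
    for L
  proof -
    have "f = (\<lambda>L. g L + f N * (if L = N then 1 else 0))" by (auto simp: g_def)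
    then show ?thesis by (metis (no_types) pqp_step_add)
  qed
  have g3: "(\<Sum>L<N+3. pqp_step a t g L *\<^sub>R basis L) = (\<Sum>L<N+2. pqp_step a t g L *\<^sub>R basis L)"
    using pqp_step_eq_0[OF g, of "N+2" a t] by (simp add: eval_nat_numeral)
  have "(\<Sum>L<Suc N. f L *\<^sub>R basis L) = (\<Sum>L<N. g L *\<^sub>R basis L) + f N *\<^sub>R basis N"
    by (simp add: g_def)
  then have "P * (Q * (\<Sum>L<Suc N. f L *\<^sub>R basis L))
      = (\<Sum>L<N+2. pqp_step a t g L *\<^sub>R basis L) + f N *\<^sub>R (P * (Q * basis N))"
    by (simp add: Suc.IH[OF g] algebra_simps)
  also have "\<dots> = (\<Sum>L<N+3. pqp_step a t g L *\<^sub>R basis L)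
      + f N *\<^sub>R (\<Sum>L<N+3. pqp_step a t (\<lambda>L. if L = N then 1 else 0) L *\<^sub>R basis L)"
    by (simp only: g3 PQ_mult_basis_eq_step)
  also have "\<dots> = (\<Sum>L<Suc N + 2. pqp_step a t f L *\<^sub>R basis L)"
    by (simp only: step_f scaleR_add_left scaleR_scaleR sum.distrib scaleR_sum_right
        add_Suc_shift numeral_3_eq_3 numeral_2_eq_2)
  finally show ?case .
qed

lemma PQ_power_mult_P: "(P * Q) ^ n * P = (\<Sum>L<2*n+1. pqp_coeff a t n L *\<^sub>R basis L)"
proof (induction n)
  case 0
  then show ?case by (simp add: basis_def)
next
  case (Suc n)
  have "(P * Q) ^ Suc n * P = P * (Q * ((P * Q) ^ n * P))" by (simp add: mult.assoc)
  also have "\<dots> = (\<Sum>L<2*n+1+2. pqp_step a t (pqp_coeff a t n) L *\<^sub>R basis L)"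
    unfolding Suc.IH by (rule PQ_mult_sum_basis) (simp add: pqp_coeff_eq_0)
  finally show ?case by simp
qed

lemma PQP_power_Suc: "(P * Q * P) ^ Suc n = (P * Q) ^ Suc n * P"
proof (induction n)
  case (Suc n)
  have "(P * Q * P) ^ Suc (Suc n) = P * Q * P * (P * Q * P) ^ Suc n" by (rule power_Suc)
  also have "\<dots> = P * Q * (P * ((P * Q) ^ Suc n * P))"
    unfolding Suc.IH by (simp only: mult.assoc)
  also have "P * ((P * Q) ^ Suc n * P) = (P * Q) ^ Suc n * P"
    by (simp only: power_Suc mult.assoc[symmetric] P_idem)
  finally show ?case by (simp only: power_Suc mult.assoc)
qed simp

lemma tau_basis:
  assumes sp: "star_prob_space st tau" and free: "free_pair tau P Q"
    and tau_P: "tau P = a" and tau_Q: "tau Q = t"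
  shows "tau (basis L) = (if L = 0 then a else 0)"
proof -
  have lin: "linear tau" by (rule star_prob_space_linear[OF sp])
  have tau_wQ: "tau (wQ L) = (if L = 0 then 1 else 0)"
  proof (cases L)
    case (Suc K)
    then show ?thesis using free_pair_alt_word_centered[OF sp free, of False K] tau_P tau_Q by simp
  qed (simp add: star_prob_space_tau_1[OF sp])
  have "tau (wP (Suc L)) = 0"
    using free_pair_alt_word_centered[OF sp free, of True L] tau_P tau_Q by simp
  then show ?thesis
    by (simp add: basis_def P_mult_wQ linear_add[OF lin] linear_scale[OF lin] tau_wQ)
qed

lemma tau_power_PQP:
  assumes sp: "star_prob_space st tau" and free: "free_pair tau P Q"
    and tau_P: "tau P = a" and tau_Q: "tau Q = t"
  shows "tau ((P * Q * P) ^ Suc n) = a * pqp_coeff a t (Suc n) 0"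
proof -
  have lin: "linear tau" by (rule star_prob_space_linear[OF sp])
  have "tau ((P * Q * P) ^ Suc n) = (\<Sum>L<2 * Suc n + 1. pqp_coeff a t (Suc n) L * (if L = 0 then a else 0))"
    by (simp only: PQP_power_Suc PQ_power_mult_P linear_sum[OF lin] linear_scale[OF lin]
        tau_basis[OF assms] real_scaleR_def)
  also have "\<dots> = a * pqp_coeff a t (Suc n) 0"
    by (simp add: if_distrib[of "\<lambda>x. _ * x"] cong: if_cong)
  finally show ?thesis .
qed

end

section \<open>Generating functions\<close>

fun motzkin_coeff :: "complex \<Rightarrow> complex \<Rightarrow> nat \<Rightarrow> complex" where
  "motzkin_coeff b k 0 = 1"
| "motzkin_coeff b k (Suc 0) = b"
| "motzkin_coeff b k (Suc (Suc n)) =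
     b * motzkin_coeff b k (Suc n) + k * (\<Sum>i\<le>n. motzkin_coeff b k i * motzkin_coeff b k (n - i))"

definition motzkin_fps :: "complex \<Rightarrow> complex \<Rightarrow> complex fps" where
  "motzkin_fps b k = Abs_fps (motzkin_coeff b k)"

lemma motzkin_fps_eq:
  "motzkin_fps b k = 1 + fps_const b * (fps_X * motzkin_fps b k) + fps_const k * (fps_X^2 * (motzkin_fps b k)^2)"
proof (rule fps_ext)
  fix n
  have sq: "((motzkin_fps b k)^2) $ m = (\<Sum>i\<le>m. motzkin_coeff b k i * motzkin_coeff b k (m - i))" for m
    by (simp add: power2_eq_square fps_mult_nth atLeast0AtMost motzkin_fps_def)
  show "motzkin_fps b k $ n = (1 + fps_const b * (fps_X * motzkin_fps b k)
      + fps_const k * (fps_X^2 * (motzkin_fps b k)^2)) $ n"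
  proof (cases n)
    case (Suc m)
    then show ?thesis
      by (cases m) (simp_all add: fps_X_power_mult_nth sq, simp_all add: motzkin_fps_def)
  qed (simp add: motzkin_fps_def)
qed

definition pqp_motzkin_fps :: "complex \<Rightarrow> complex \<Rightarrow> complex fps" where
  "pqp_motzkin_fps a t = motzkin_fps (a*(1-t) + t*(1-a)) (a*t*(1-a)*(1-t))"

definition pqp_moment_fps :: "complex \<Rightarrow> complex \<Rightarrow> complex fps" where
  "pqp_moment_fps a t =
     inverse (1 - fps_const t * fps_X - fps_const a * fps_const t * (1 - fps_const t) * fps_X^2
       * pqp_motzkin_fps a t)"

text \<open>Closed forms of the generating functions \<open>\<Sum>\<^sub>n pqp_coeff a t n L x\<^sup>n\<close>: away from the boundary
  rows the recursion of \<open>pqp_step\<close> is that of Motzkin paths, which gives \<open>F\<^sub>L\<^sub>+\<^sub>2 = x M F\<^sub>L\<close>;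
  the two boundary rows then determine \<open>F\<^sub>0\<close> and \<open>F\<^sub>1\<close>.\<close>
fun pqp_coord_fps :: "complex \<Rightarrow> complex \<Rightarrow> nat \<Rightarrow> complex fps" where
  "pqp_coord_fps a t 0 = pqp_moment_fps a t"
| "pqp_coord_fps a t (Suc 0) = fps_const a * fps_X * pqp_moment_fps a t * pqp_motzkin_fps a t"
| "pqp_coord_fps a t (Suc (Suc L)) = fps_X * pqp_motzkin_fps a t * pqp_coord_fps a t L"

lemma pqp_motzkin_fps_eq:
  fixes a t :: complex
  defines "A \<equiv> fps_const a" and "T \<equiv> fps_const t" and "M \<equiv> pqp_motzkin_fps a t"
  shows "M = 1 + (A*(1-T) + T*(1-A)) * (fps_X * M) + (A*T*(1-A)*(1-T)) * (fps_X^2 * M^2)"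
  using motzkin_fps_eq[of "a*(1-t) + t*(1-a)" "a*t*(1-a)*(1-t)"]
  unfolding assms pqp_motzkin_fps_def
  by (simp only: fps_const_add[symmetric] fps_const_mult[symmetric] fps_const_sub[symmetric]
      fps_const_1_eq_1[symmetric])

lemma pqp_moment_fps_inverse:
  fixes a t :: complex
  defines "A \<equiv> fps_const a" and "T \<equiv> fps_const t" and "M \<equiv> pqp_motzkin_fps a t"
  shows "pqp_moment_fps a t * (1 - T * fps_X - A*T*(1-T) * fps_X^2 * M) = 1"
  unfolding assms pqp_moment_fps_def by (rule inverse_mult_eq_1) simp

lemma pqp_coord_fps_recursion:
  fixes a t :: complex
  defines "A \<equiv> fps_const a" and "T \<equiv> fps_const t" and "F \<equiv> pqp_coord_fps a t"
  shows "F 0 = 1 + fps_X * (T * F 0 + (A*T*(1-T)) * F 1 + (A*T*(1-A)*(1-T)) * F 2)"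
    and "F 1 = fps_X * (A * F 0 + (A*(1-T) + T*(1-A)) * F 1 + (A*T*(1-A)*(1-T)) * F 3)"
    and "F (Suc (Suc L)) = fps_X * (F L + (A*(1-T) + T*(1-A)) * F (Suc (Suc L))
           + (A*T*(1-A)*(1-T)) * F (L+4))"
proof -
  note M = pqp_motzkin_fps_eq[of a t, folded A_def T_def]
  show "F 0 = 1 + fps_X * (T * F 0 + (A*T*(1-T)) * F 1 + (A*T*(1-A)*(1-T)) * F 2)"
    using pqp_moment_fps_inverse[of a t, folded A_def T_def]
    unfolding F_def A_def by (simp add: numeral_2_eq_2) algebra
  show "F 1 = fps_X * (A * F 0 + (A*(1-T) + T*(1-A)) * F 1 + (A*T*(1-A)*(1-T)) * F 3)"
    using M unfolding F_def A_def by (simp add: numeral_3_eq_3) algebra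
  show "F (Suc (Suc L)) = fps_X * (F L + (A*(1-T) + T*(1-A)) * F (Suc (Suc L))
      + (A*T*(1-A)*(1-T)) * F (L+4))"
    using M unfolding F_def by (simp add: eval_nat_numeral) algebra
qed

lemma pqp_moment_fps_nth_0: "pqp_moment_fps a t $ 0 = 1"
  by (simp add: pqp_moment_fps_def)

lemma pqp_coord_fps_nth:
  "pqp_coord_fps (of_real a) (of_real t) L $ n = of_real (pqp_coeff a t n L)"
proof (induction n arbitrary: L)
  case 0
  show ?case
  proof (cases L)
    case (Suc K)
    then show ?thesis by (cases K) simp_all
  qed (simp add: pqp_moment_fps_nth_0)
next
  case (Suc n)
  note rec = pqp_coord_fps_recursion[of "of_real a" "of_real t"]
  consider "L = 0" | "L = 1" | K where "L = Suc (Suc K)"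
    by (metis One_nat_def not0_implies_Suc)
  then show ?case
  proof cases
    case 1
    show ?thesis unfolding 1 by (subst rec(1)) (simp add: Suc.IH algebra_simps del: pqp_coord_fps.simps)
  next
    case 2
    show ?thesis unfolding 2 by (subst rec(2)) (simp add: Suc.IH algebra_simps del: pqp_coord_fps.simps)
  next
    case 3
    show ?thesis unfolding 3 by (subst rec(3)) (simp add: Suc.IH algebra_simps del: pqp_coord_fps.simps eval_nat_numeral)
  qed
qed

lemma pqp_moment_fps_nth: "pqp_moment_fps (of_real a) (of_real t) $ n = of_real (pqp_coeff a t n 0)"
  using pqp_coord_fps_nth[of a t 0 n] by simp

lemma pqp_moment_fps_quadratic:
  fixes a t :: complex
  defines "A \<equiv> fps_const a" and "T \<equiv> fps_const t" and "C \<equiv> pqp_moment_fps a t"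
  shows "fps_X * C * (T + A * (C - 1)) = (C - 1) * (1 + A * (C - 1))"
proof -
  have quadratic: "X * C * (T + A * (C - 1)) = (C - 1) * (1 + A * (C - 1))"
    if "C * D = 1" and "D = 1 - T * X - A*T*(1-T) * X^2 * M"
      and "M = 1 + (A*(1-T) + T*(1-A)) * (X * M) + (A*T*(1-A)*(1-T)) * (X^2 * M^2)"
    for A T X M C D :: "complex fps"
    using that by algebra
  show ?thesis
    by (rule quadratic[OF pqp_moment_fps_inverse[of a t, folded A_def T_def C_def] refl
          pqp_motzkin_fps_eq[of a t, folded A_def T_def]])
qed

lemma abs_weighted_sum3_le:
  fixes w1 w2 w3 x1 x2 x3 B :: real
  assumes "\<bar>w1\<bar> \<le> 1" "\<bar>w2\<bar> \<le> 1" "\<bar>w3\<bar> \<le> 1" "\<bar>x1\<bar> \<le> B" "\<bar>x2\<bar> \<le> B" "\<bar>x3\<bar> \<le> B"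
  shows "\<bar>w1 * x1 + w2 * x2 + w3 * x3\<bar> \<le> 3 * B"
proof -
  have "\<bar>w * x\<bar> \<le> B" if "\<bar>w\<bar> \<le> 1" "\<bar>x\<bar> \<le> B" for w x :: real
    using mult_mono[OF that] by (simp add: abs_mult)
  then have "\<bar>w1 * x1\<bar> \<le> B" "\<bar>w2 * x2\<bar> \<le> B" "\<bar>w3 * x3\<bar> \<le> B" using assms by blast+
  then show ?thesis by linarith
qed

lemma pqp_step_abs_le:
  assumes "0 \<le> a" "a \<le> 1" "0 \<le> t" "t \<le> 1" and f: "\<And>L. \<bar>f L\<bar> \<le> B"
  shows "\<bar>pqp_step a t f L\<bar> \<le> 3 * B"
proof -
  have unit: "\<bar>x * y\<bar> \<le> 1" if "\<bar>x\<bar> \<le> 1" "\<bar>y\<bar> \<le> 1" for x y :: real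
    using mult_mono[OF that] by (simp add: abs_mult)
  have "\<bar>t\<bar> \<le> 1" "\<bar>a\<bar> \<le> 1" "\<bar>1 - t\<bar> \<le> 1" "\<bar>1 - a\<bar> \<le> 1" using assms by auto
  then have w: "\<bar>a*t*(1-t)\<bar> \<le> 1" "\<bar>a*t*(1-a)*(1-t)\<bar> \<le> 1" "\<bar>t\<bar> \<le> 1" "\<bar>a\<bar> \<le> 1"
    using unit by meson+
  have "0 \<le> a*(1-t) + t*(1-a)" "0 \<le> (1-a)*(1-t) + a*t" using assms by simp_all
  then have b: "\<bar>a + t - 2*a*t\<bar> \<le> 1" by (simp add: algebra_simps)
  note sum3 = abs_weighted_sum3_le[OF _ _ _ f f f]
  show ?thesis
  proof (cases L)
    case 0
    then show ?thesis using sum3[of t "a*t*(1-t)" "a*t*(1-a)*(1-t)"] w by simp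
  next
    case (Suc K)
    show ?thesis
    proof (cases K)
      case 0
      then show ?thesis using Suc sum3[of a "a+t-2*a*t" "a*t*(1-a)*(1-t)"] w b by simp
    next
      case (Suc K')
      then show ?thesis using \<open>L = Suc K\<close> sum3[of 1 "a+t-2*a*t" "a*t*(1-a)*(1-t)"] w b by simp
    qed
  qed
qed

lemma pqp_coeff_abs_le:
  assumes "0 \<le> a" "a \<le> 1" "0 \<le> t" "t \<le> 1"
  shows "\<bar>pqp_coeff a t n L\<bar> \<le> 3 ^ n"
proof (induction n arbitrary: L)
  case (Suc n)
  then show ?case using pqp_step_abs_le[OF assms, of "pqp_coeff a t n" "3 ^ n" L] by simp
qed simp

section \<open>S transforms\<close>

lemma isCont_eventually_eq_nhds:
  fixes f g :: "'a::{perfect_space,t2_space} \<Rightarrow> 'b::t2_space"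
  assumes "isCont f a" "isCont g a" "\<forall>\<^sub>F x in at a. f x = g x"
  shows "\<forall>\<^sub>F x in nhds a. f x = g x"
proof -
  have "g \<midarrow>a\<rightarrow> f a" using assms(1,3) by (simp add: isCont_def tendsto_cong)
  then have "f a = g a" using assms(2) unfolding isCont_def by (rule LIM_unique)
  with assms(3) show ?thesis by (simp add: eventually_nhds_conv_at)
qed

lemma eventually_norm_less_nhds:
  fixes f :: "'a::t2_space \<Rightarrow> 'b::real_normed_vector"
  assumes "isCont f a" "norm (f a) < r"
  shows "\<forall>\<^sub>F x in nhds a. norm (f x) < r"
proof -
  have "(\<lambda>x. norm (f x)) \<midarrow>a\<rightarrow> norm (f a)"
    using assms(1) by (intro tendsto_norm) (simp add: isCont_def)
  then have "\<forall>\<^sub>F x in at a. norm (f x) < r" using assms(2) by (rule order_tendstoD)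
  with assms(2) show ?thesis by (simp add: eventually_nhds_conv_at)
qed

lemma eventually_neq_nhds:
  fixes f :: "'a::t2_space \<Rightarrow> 'b::t2_space"
  assumes "isCont f a" "f a \<noteq> c"
  shows "\<forall>\<^sub>F x in nhds a. f x \<noteq> c"
  using assms tendsto_imp_eventually_ne[of f "f a" "at a" c]
  by (simp add: isCont_def eventually_nhds_conv_at)

text \<open>Here \<open>F\<close> is the moment series, and \<open>inverse\<close> says that \<open>w \<mapsto> w N(w) / D(w)\<close> is the local
  inverse of \<open>F - 1\<close>.\<close>
context
  fixes m :: "nat \<Rightarrow> complex" and F D N :: "complex \<Rightarrow> complex" and \<rho> :: real
  assumes "\<rho> > 0" and sums: "\<And>x. norm x < \<rho> \<Longrightarrow> (\<lambda>n. m n * x ^ n) sums F x"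
    and "m 1 \<noteq> 0" and D: "continuous_on UNIV D" "D 0 \<noteq> 0" and N: "continuous_on UNIV N"
    and inverse: "\<And>x w. norm x < \<rho> \<Longrightarrow> norm w < \<rho> \<Longrightarrow> F x = 1 + w \<longleftrightarrow> x * D w = w * N w"
begin

lemma inverse_defined_near_0: "\<forall>\<^sub>F w in nhds 0. D w \<noteq> 0 \<and> norm w < \<rho> \<and> norm (w * N w / D w) < \<rho>"
proof -
  have "isCont D 0" "isCont N 0" using D N by (simp_all add: continuous_on_eq_continuous_at)
  then have "isCont (\<lambda>w. w * N w / D w) 0" using D(2) by (auto intro!: continuous_intros)
  then show ?thesis
    using eventually_neq_nhds[OF \<open>isCont D 0\<close> D(2)] \<open>\<rho> > 0\<close>
      eventually_norm_less_nhds[where f="\<lambda>w. w" and a=0 and r=\<rho>]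
      eventually_norm_less_nhds[where f="\<lambda>w. w * N w / D w" and a=0 and r=\<rho>]
    by (auto intro: eventually_conj)
qed

lemma S_transform_exists_from_inverse: "is_S_transform m (\<lambda>w. (1 + w) * N w / D w)"
proof -
  define eta where "eta w = w * N w / D w" for w
  obtain r where "r > 0" and r: "\<And>w. norm w < r \<Longrightarrow> D w \<noteq> 0 \<and> norm w < \<rho> \<and> norm (eta w) < \<rho>"
    using inverse_defined_near_0 unfolding eventually_nhds_metric eta_def by (auto simp: dist_norm)
  have "continuous_on (ball 0 r) eta"
    unfolding eta_def using r
    by (intro continuous_intros continuous_on_subset[OF D(1)] continuous_on_subset[OF N]) auto
  moreover have "(\<lambda>n. m n * eta w ^ n) sums (1 + w)" if "w \<in> ball 0 r" for w
  proof -
    from that r have "D w \<noteq> 0" "norm w < \<rho>" "norm (eta w) < \<rho>" by auto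
    then have "F (eta w) = 1 + w" by (subst inverse) (auto simp: eta_def)
    then show ?thesis using sums[OF \<open>norm (eta w) < \<rho>\<close>] by simp
  qed
  moreover have "isCont (\<lambda>w. (1 + w) * N w / D w) 0"
    using D N by (auto intro!: continuous_intros simp: continuous_on_eq_continuous_at)
  ultimately show ?thesis
    unfolding is_S_transform_def using \<open>r > 0\<close> \<open>m 1 \<noteq> 0\<close>
    by (intro conjI exI[of _ r] exI[of _ eta]) (auto simp: eta_def)
qed

lemma S_transform_eq_from_inverse:
  assumes "is_S_transform m S"
  shows "\<forall>\<^sub>F w in nhds 0. S w = (1 + w) * N w / D w"
proof -
  from assms obtain r eta where "r > 0" "eta 0 = 0" "continuous_on (ball 0 r) eta"
    and eta_sums: "\<forall>w\<in>ball 0 r. (\<lambda>n. m n * eta w ^ n) sums (1 + w)"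
    and S: "\<forall>w\<in>ball 0 r. w \<noteq> 0 \<longrightarrow> S w = (1 + w) / w * eta w" and "isCont S 0"
    unfolding is_S_transform_def by blast
  have "isCont eta 0"
    using \<open>r > 0\<close> \<open>continuous_on (ball 0 r) eta\<close> by (simp add: continuous_on_interior)
  have "\<forall>\<^sub>F w in nhds 0. norm w < r \<and> norm (eta w) < \<rho>"
    using eventually_norm_less_nhds[where f="\<lambda>w. w" and a=0 and r=r]
      eventually_norm_less_nhds[OF \<open>isCont eta 0\<close>, of \<rho>]
      \<open>r > 0\<close> \<open>eta 0 = 0\<close> \<open>\<rho> > 0\<close> by (auto intro: eventually_conj)
  then have "\<forall>\<^sub>F w in nhds 0. w \<noteq> 0 \<longrightarrow> S w = (1 + w) * N w / D w"
    using inverse_defined_near_0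
  proof eventually_elim
    case (elim w)
    then have "F (eta w) = 1 + w"
      using sums_unique2[OF sums eta_sums[rule_format]] by auto
    with elim have "eta w = w * N w / D w" using inverse by (auto simp: field_simps)
    then show ?case using S elim by auto
  qed
  moreover have "isCont (\<lambda>w. (1 + w) * N w / D w) 0"
    using D N by (auto intro!: continuous_intros simp: continuous_on_eq_continuous_at)
  ultimately show ?thesis
    by (intro isCont_eventually_eq_nhds \<open>isCont S 0\<close>) (simp_all add: eventually_at_filter)
qed

end

lemma S_transform_projection:
  assumes sp: "star_prob_space st tau" and "orth_proj st Q" and tau_Q: "tau Q = \<theta>" and "\<theta> > 0"
  shows "(\<exists>S. is_S_transform (\<lambda>n. complex_of_real (tau (Q ^ n))) S) \<and>
    (\<forall>S. is_S_transform (\<lambda>n. complex_of_real (tau (Q ^ n))) S \<longrightarrow>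
       (\<forall>\<^sub>F w in nhds 0. S w = (1 + w) / (of_real \<theta> + w)))"
proof -
  have "Q ^ Suc n = Q" for n
    using \<open>orth_proj st Q\<close> by (induction n) (simp_all add: orth_proj_def)
  then have moments: "(\<lambda>n. complex_of_real (tau (Q ^ n))) = (\<lambda>n. if n = 0 then 1 else of_real \<theta>)"
    using star_prob_space_tau_1[OF sp] tau_Q by (auto simp: fun_eq_iff gr0_conv_Suc)
  define F where "F x = of_real \<theta> / (1 - x) + (1 - of_real \<theta>)" for x :: complex
  have sums: "(\<lambda>n. (if n = 0 then 1 else of_real \<theta>) * x ^ n) sums F x" if "norm x < 1" for x :: complex
  proof -
    have "(\<lambda>n. of_real \<theta> * x ^ n) sums (of_real \<theta> * (1 / (1 - x)))"
      using that by (intro sums_mult geometric_sums) simp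
    then have "(\<lambda>n. of_real \<theta> * x ^ n + (if n = 0 then 1 - of_real \<theta> else 0)) sums F x"
      unfolding F_def using sums_add sums_single by fastforce
    then show ?thesis by (rule sums_cong[THEN iffD1, rotated]) simp
  qed
  have inverse: "F x = 1 + w \<longleftrightarrow> x * (of_real \<theta> + w) = w * 1" if "norm x < 1" for x w :: complex
  proof -
    have "1 - x \<noteq> 0" using that by auto
    then show ?thesis by (auto simp: F_def field_simps)
  qed
  have cont: "continuous_on UNIV (\<lambda>w::complex. of_real \<theta> + w)" "continuous_on UNIV (\<lambda>w::complex. 1)"
    by (intro continuous_intros)+
  note from_inverse = S_transform_exists_from_inverse[where \<rho>=1, OF _ sums _ cont(1) _ cont(2) inverse]
    S_transform_eq_from_inverse[where \<rho>=1, OF _ sums _ cont(1) _ cont(2) inverse]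
  show ?thesis
    unfolding moments using from_inverse \<open>\<theta> > 0\<close> by auto
qed

lemma pqp_moment_fps_conv_radius:
  assumes "0 \<le> a" "a \<le> 1" "0 \<le> t" "t \<le> 1"
  shows "ereal (1/3) \<le> fps_conv_radius (pqp_moment_fps (of_real a) (of_real t))"
  unfolding fps_conv_radius_def
proof (rule conv_radius_geI_ex')
  fix r :: real assume r: "0 < r" "ereal r < ereal (1/3)"
  have "summable (\<lambda>n. (3 * r) ^ n)" using r by (intro summable_geometric) simp
  then show "summable (\<lambda>n. pqp_moment_fps (of_real a) (of_real t) $ n * of_real r ^ n)"
  proof (rule summable_comparison_test'[where N=0])
    fix n
    have "norm (pqp_moment_fps (of_real a) (of_real t) $ n * of_real r ^ n) = \<bar>pqp_coeff a t n 0\<bar> * r ^ n"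
      using r by (simp add: pqp_moment_fps_nth norm_mult norm_power)
    also have "\<dots> \<le> 3 ^ n * r ^ n"
      using pqp_coeff_abs_le[OF assms] r by (intro mult_right_mono) auto
    finally show "norm (pqp_moment_fps (of_real a) (of_real t) $ n * of_real r ^ n) \<le> (3 * r) ^ n"
      by (simp add: power_mult_distrib)
  qed
qed

text \<open>If \<open>u = F x - 1\<close> and \<open>w\<close> both solve \<open>x (1 + u) (t + a u) = u (1 + a u)\<close>, then
  \<open>(u - w) (x (a + t) + a (u + w) (x - 1) - 1) = 0\<close>, and the second factor cannot vanish
  for small \<open>x\<close>, \<open>u\<close>, \<open>w\<close>.\<close>
lemma quadratic_local_inverse:
  fixes F :: "complex \<Rightarrow> complex" and a t :: complex
  assumes "norm a \<le> 1" "norm t \<le> 1" "isCont F 0" "F 0 = 1" "\<rho> > 0"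
    and quad: "\<And>x. norm x < \<rho> \<Longrightarrow> x * F x * (t + a * (F x - 1)) = (F x - 1) * (1 + a * (F x - 1))"
  shows "\<exists>r>0. \<forall>x w. norm x < r \<longrightarrow> norm w < r \<longrightarrow>
           x * ((1 + w) * (t + a * w)) = w * (1 + a * w) \<longrightarrow> F x = 1 + w"
proof -
  have "\<forall>\<^sub>F x in nhds 0. norm (F x - 1) < 1/8"
    using \<open>F 0 = 1\<close> by (intro eventually_norm_less_nhds continuous_intros \<open>isCont F 0\<close>) simp
  then obtain d where "d > 0" and d: "\<And>x. norm x < d \<Longrightarrow> norm (F x - 1) < 1/8"
    unfolding eventually_nhds_metric by (auto simp: dist_norm)
  define r where "r = min (min d \<rho>) (1/8)"
  have "F x = 1 + w"
    if x: "norm x < r" and w: "norm w < r" and eq: "x * ((1 + w) * (t + a * w)) = w * (1 + a * w)" for x w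
  proof (rule ccontr)
    define u where "u = F x - 1"
    assume "F x \<noteq> 1 + w"
    then have "u \<noteq> w" by (auto simp: u_def)
    have "norm u < 1/8" "norm x < 1/8" "norm w < 1/8" using d x w by (auto simp: u_def r_def)
    have "(u - w) * (x * (a + t) + a * (u + w) * (x - 1) - 1) =
        (x * (1 + u) * (t + a * u) - u * (1 + a * u)) - (x * ((1 + w) * (t + a * w)) - w * (1 + a * w))"
      by (simp add: algebra_simps)
    also have "\<dots> = 0" using quad[of x] x eq by (simp add: u_def r_def)
    finally have "x * (a + t) + a * (u + w) * (x - 1) = 1" using \<open>u \<noteq> w\<close> by simp
    moreover have "norm (x * (a + t)) \<le> norm x * 2"
      using norm_triangle_ineq[of a t] assms(1,2) by (simp add: norm_mult mult_left_mono)
    moreover have "norm (a * (u + w) * (x - 1)) \<le> 1 * (1/4) * (9/8)"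
    proof -
      have "norm (u + w) \<le> 1/4"
        using norm_triangle_ineq[of u w] \<open>norm u < 1/8\<close> \<open>norm w < 1/8\<close> by simp
      moreover have "norm (x - 1) \<le> 9/8" using norm_triangle_ineq4[of x 1] \<open>norm x < 1/8\<close> by simp
      ultimately show ?thesis unfolding norm_mult using assms(1) by (intro mult_mono) auto
    qed
    ultimately show False
      using norm_triangle_ineq[of "x * (a + t)" "a * (u + w) * (x - 1)"] \<open>norm x < 1/8\<close> by simp
  qed
  moreover have "r > 0" using \<open>d > 0\<close> \<open>\<rho> > 0\<close> by (simp add: r_def)
  ultimately show ?thesis by blast
qed

lemma compressed_PQP_moments:
  fixes P Q :: "'a::real_algebra_1"
  assumes sp: "star_prob_space st tau" and "orth_proj st P" "orth_proj st Q" and free: "free_pair tau P Q"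
    and tau_P: "tau P = a" and tau_Q: "tau Q = t" and "a \<noteq> 0"
  shows "(\<lambda>n. if n = 0 then 1 else complex_of_real (tau ((P * Q * P) ^ n) / tau P))
    = (\<lambda>n. pqp_moment_fps (of_real a) (of_real t) $ n)"
proof
  interpret idempotent_pair P Q a t
    using \<open>orth_proj st P\<close> \<open>orth_proj st Q\<close> by unfold_locales (simp_all add: orth_proj_def)
  fix n
  show "(if n = 0 then 1 else complex_of_real (tau ((P * Q * P) ^ n) / tau P))
    = pqp_moment_fps (of_real a) (of_real t) $ n"
    using tau_power_PQP[OF sp free tau_P tau_Q] \<open>a \<noteq> 0\<close> tau_P
    by (cases n) (simp_all add: pqp_moment_fps_nth_0 pqp_moment_fps_nth)
qed

lemma pqp_moment_series_quadratic:
  assumes "0 \<le> a" "a \<le> 1" "0 \<le> t" "t \<le> 1"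
  defines "F \<equiv> eval_fps (pqp_moment_fps (of_real a) (of_real t))"
  shows "\<forall>\<^sub>F x in nhds 0.
    x * F x * (of_real t + of_real a * (F x - 1)) = (F x - 1) * (1 + of_real a * (F x - 1))"
proof -
  define C where "C = pqp_moment_fps (of_real a) (of_real t)"
  have "ereal 0 < ereal (1/3)" by simp
  then have "0 < fps_conv_radius C"
    using pqp_moment_fps_conv_radius[OF assms(1-4)] unfolding C_def zero_ereal_def
    by (rule order.strict_trans2)
  then have "(\<lambda>x. x * F x * (of_real t + of_real a * (F x - 1)) - (F x - 1) * (1 + of_real a * (F x - 1)))
      has_fps_expansion (fps_X * C * (fps_const (of_real t) + fps_const (of_real a) * (C - 1))
        - (C - 1) * (1 + fps_const (of_real a) * (C - 1)))"
    unfolding F_def C_def by (intro fps_expansion_intros eval_fps_has_fps_expansion)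
  then have "(\<lambda>x. x * F x * (of_real t + of_real a * (F x - 1)) - (F x - 1) * (1 + of_real a * (F x - 1)))
      has_fps_expansion 0"
    by (simp add: C_def pqp_moment_fps_quadratic)
  then show ?thesis unfolding has_fps_expansion_def by (auto elim: eventually_mono)
qed

lemma pqp_moment_series_local_inverse:
  assumes "0 < a" "a \<le> 1" "0 < t" "t \<le> 1"
  defines "C \<equiv> pqp_moment_fps (of_real a) (of_real t)"
  obtains \<rho> where "\<rho> > 0" and "\<And>x. norm x < \<rho> \<Longrightarrow> (\<lambda>n. C $ n * x ^ n) sums eval_fps C x"
    and "\<And>x w. norm x < \<rho> \<Longrightarrow> norm w < \<rho> \<Longrightarrow>
      eval_fps C x = 1 + w \<longleftrightarrow> x * ((1 + w) * (of_real t + of_real a * w)) = w * (1 + of_real a * w)"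
proof -
  define F where "F = eval_fps C"
  have radius: "ereal (norm x) < fps_conv_radius C" if "norm x < 1/3" for x
    using that pqp_moment_fps_conv_radius[of a t] assms order.strict_trans2[of "ereal (norm x)" "ereal (1/3)"]
    by simp
  obtain \<rho>1 where "\<rho>1 > 0" and quad: "\<And>x. norm x < \<rho>1 \<Longrightarrow>
      x * F x * (of_real t + of_real a * (F x - 1)) = (F x - 1) * (1 + of_real a * (F x - 1))"
    using pqp_moment_series_quadratic[of a t] assms unfolding eventually_nhds_metric F_def C_def
    by (auto simp: dist_norm)
  have "isCont F 0" unfolding F_def using radius[of 0] by (intro continuous_eval_fps) simp
  moreover have "F 0 = 1" by (simp add: F_def eval_fps_at_0 C_def pqp_moment_fps_nth_0)
  ultimately obtain r where "r > 0" and solves: "\<And>x w. norm x < r \<Longrightarrow> norm w < r \<Longrightarrow>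
      x * ((1 + w) * (of_real t + of_real a * w)) = w * (1 + of_real a * w) \<Longrightarrow> F x = 1 + w"
    using quadratic_local_inverse[of "of_real a" "of_real t" F \<rho>1] quad \<open>\<rho>1 > 0\<close> assms(1-4) by auto
  show ?thesis
  proof (rule that[of "min (1/3) (min \<rho>1 r)"])
    show "min (1/3) (min \<rho>1 r) > 0" using \<open>\<rho>1 > 0\<close> \<open>r > 0\<close> by simp
    show "(\<lambda>n. C $ n * x ^ n) sums eval_fps C x" if "norm x < min (1/3) (min \<rho>1 r)" for x
      using that by (intro sums_eval_fps radius) simp
    show "eval_fps C x = 1 + w \<longleftrightarrow> x * ((1 + w) * (of_real t + of_real a * w)) = w * (1 + of_real a * w)"
      if "norm x < min (1/3) (min \<rho>1 r)" "norm w < min (1/3) (min \<rho>1 r)" for x w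
      using that quad[of x] solves[of x w] by (auto simp: F_def mult.assoc)
  qed
qed

lemma S_transform_compressed_PQP:
  fixes P Q :: "'a::real_algebra_1"
  assumes "0 < a" "a \<le> 1" "0 < t" "t \<le> 1" and sp: "star_prob_space st tau"
    and "orth_proj st P" "orth_proj st Q" and free: "free_pair tau P Q"
    and tau_P: "tau P = a" and tau_Q: "tau Q = t"
  shows "(\<exists>S. is_S_transform (\<lambda>n. if n = 0 then 1 else complex_of_real (tau ((P * Q * P) ^ n) / tau P)) S) \<and>
    (\<forall>S. is_S_transform (\<lambda>n. if n = 0 then 1 else complex_of_real (tau ((P * Q * P) ^ n) / tau P)) S \<longrightarrow>
       (\<forall>\<^sub>F w in nhds 0. S w = (of_real a * w + 1) / (of_real a * w + of_real t)))"
proof -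
  define C where "C = pqp_moment_fps (of_real a) (of_real t)"
  define D where "D w = (1 + w) * (of_real t + of_real a * w)" for w :: complex
  define N where "N w = 1 + of_real a * w" for w :: complex
  obtain \<rho> where "\<rho> > 0" and sums: "\<And>x. norm x < \<rho> \<Longrightarrow> (\<lambda>n. C $ n * x ^ n) sums eval_fps C x"
    and inverse: "\<And>x w. norm x < \<rho> \<Longrightarrow> norm w < \<rho> \<Longrightarrow> eval_fps C x = 1 + w \<longleftrightarrow> x * D w = w * N w"
    unfolding C_def D_def N_def by (rule pqp_moment_series_local_inverse[OF assms(1-4)]) blast
  have "C $ 1 \<noteq> 0" using assms(3) by (simp add: C_def pqp_moment_fps_nth)
  moreover have "continuous_on UNIV D" "continuous_on UNIV N"
    unfolding D_def N_def by (intro continuous_intros)+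
  moreover have "D 0 \<noteq> 0" using assms(3) by (simp add: D_def)
  ultimately have S: "is_S_transform (\<lambda>n. C $ n) (\<lambda>w. (1 + w) * N w / D w)"
      "\<And>S. is_S_transform (\<lambda>n. C $ n) S \<Longrightarrow> \<forall>\<^sub>F w in nhds 0. S w = (1 + w) * N w / D w"
    using S_transform_exists_from_inverse[OF \<open>\<rho> > 0\<close> sums _ _ _ _ inverse]
      S_transform_eq_from_inverse[OF \<open>\<rho> > 0\<close> sums _ _ _ _ inverse] by blast+
  have "\<forall>\<^sub>F w in nhds 0. 1 + w \<noteq> (0::complex)"
    by (intro eventually_neq_nhds continuous_intros) simp
  then have simplify: "\<forall>\<^sub>F w in nhds 0. (1 + w) * N w / D w = (of_real a * w + 1) / (of_real a * w + of_real t)"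
    by eventually_elim (simp add: D_def N_def add_ac)
  have moments: "(\<lambda>n. if n = 0 then 1 else complex_of_real (tau ((P * Q * P) ^ n) / tau P)) = (\<lambda>n. C $ n)"
    using compressed_PQP_moments[OF sp \<open>orth_proj st P\<close> \<open>orth_proj st Q\<close> free tau_P tau_Q] assms(1)
    by (simp add: C_def)
  show ?thesis
    unfolding moments
  proof (intro conjI allI impI)
    show "\<exists>S. is_S_transform (\<lambda>n. C $ n) S" using S(1) by blast
    fix S assume "is_S_transform (\<lambda>n. C $ n) S"
    from S(2)[OF this] simplify
    show "\<forall>\<^sub>F w in nhds 0. S w = (of_real a * w + 1) / (of_real a * w + of_real t)"
      by eventually_elim simp
  qed
qed

section \<open>The stationary equation\<close>

definition stationary_lhs :: "complex \<Rightarrow> complex \<Rightarrow> (complex \<Rightarrow> complex) \<Rightarrow> complex \<Rightarrow> complex" where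
  "stationary_lhs L T S z = (2 * (L * T) * z + 1) * S z - T * (1 + 2 * L * z) * (S z)\<^sup>2
     - T * z * (1 + L * z) / 2 * deriv (\<lambda>w. (S w)\<^sup>2) z"

text \<open>Off the zeros of \<open>S\<close> the equation is linear, and \<open>first_integral L T S\<close> is constant along
  its solutions.\<close>
definition first_integral :: "complex \<Rightarrow> complex \<Rightarrow> (complex \<Rightarrow> complex) \<Rightarrow> complex \<Rightarrow> complex" where
  "first_integral L T S z = T * z * (1 + L * z) * S z - z * (L * T * z + 1)"

lemma first_integral_has_field_derivative:
  assumes "(S has_field_derivative S') (at z)"
  shows "(first_integral L T S has_field_derivative
           T * (1 + 2 * L * z) * S z + T * z * (1 + L * z) * S' - (2 * (L * T) * z + 1)) (at z)"
  unfolding first_integral_def [abs_def]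
  by (rule derivative_eq_intros assms refl)+ (simp add: algebra_simps)

lemma stationary_lhs_eq:
  assumes "(S has_field_derivative S') (at z)"
  shows "stationary_lhs L T S z =
    - S z * (T * (1 + 2 * L * z) * S z + T * z * (1 + L * z) * S' - (2 * (L * T) * z + 1))"
proof -
  have "deriv (\<lambda>w. (S w)\<^sup>2) z = 2 * S z * S'"
    by (rule DERIV_imp_deriv) (rule derivative_eq_intros assms refl | simp)+
  then show ?thesis by (simp add: stationary_lhs_def algebra_simps power2_eq_square)
qed

lemma first_integral_eq_0_iff:
  assumes "z \<noteq> 0" "L * T * z + T \<noteq> 0"
  shows "first_integral L T S z = 0 \<longleftrightarrow> S z = (L * T * z + 1) / (L * T * z + T)"
proof -
  have "first_integral L T S z = z * ((L * T * z + T) * S z - (L * T * z + 1))"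
    by (simp add: first_integral_def algebra_simps)
  then have "first_integral L T S z = 0 \<longleftrightarrow> S z * (L * T * z + T) = L * T * z + 1"
    using assms(1) by (simp add: mult.commute)
  then show ?thesis using assms(2) by (simp add: eq_divide_eq)
qed

lemma first_integral_eq_0_on_ball:
  assumes hol: "S holomorphic_on ball 0 r"
    and sol: "\<And>z. z \<in> ball 0 r - {0} \<Longrightarrow> stationary_lhs L T S z = 0 \<and> S z \<noteq> 0"
    and "z \<in> ball 0 r"
  shows "first_integral L T S z = 0"
proof -
  have cont: "continuous_on (ball 0 r) (first_integral L T S)"
    unfolding first_integral_def [abs_def]
    by (intro holomorphic_on_imp_continuous_on holomorphic_intros hol)
  have deriv0: "(first_integral L T S has_field_derivative 0) (at w)" if "w \<in> ball 0 r - {0}" for w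
  proof -
    have dS: "(S has_field_derivative deriv S w) (at w)"
      using that by (intro holomorphic_derivI[OF hol]) auto
    with sol[OF that] have "T * (1 + 2 * L * w) * S w + T * w * (1 + L * w) * deriv S w
        - (2 * (L * T) * w + 1) = 0"
      by (auto simp: stationary_lhs_eq)
    with first_integral_has_field_derivative[OF dS, of L T] show ?thesis by simp
  qed
  obtain c where "\<And>w. w \<in> ball 0 r \<Longrightarrow> first_integral L T S w = c"
    by (rule DERIV_zero_connected_constant[OF connected_ball open_ball, of "{0}"]) (auto intro: cont deriv0)
  moreover have "0 \<in> ball 0 r" using \<open>z \<in> ball 0 r\<close> by (auto intro: le_less_trans[OF norm_ge_zero])
  ultimately show ?thesis using \<open>z \<in> ball 0 r\<close> by (metis first_integral_def mult_zero_left mult_zero_right diff_self)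
qed

lemma stationary_solution_cases:
  fixes L T :: complex
  assumes "T \<noteq> 0" and an: "S analytic_on {0}" and sol: "\<forall>\<^sub>F z in nhds 0. stationary_lhs L T S z = 0"
  shows "(\<forall>\<^sub>F z in nhds 0. S z = 0) \<or> (\<forall>\<^sub>F z in nhds 0. S z = (L * T * z + 1) / (L * T * z + T))"
proof -
  obtain e where "e > 0" "S holomorphic_on ball 0 e" using an by (auto simp: analytic_on_def)
  have "\<forall>\<^sub>F z in nhds 0. norm z < e \<and> stationary_lhs L T S z = 0 \<and> L * T * z + T \<noteq> 0"
    using eventually_norm_less_nhds[where f="\<lambda>z. z" and a=0 and r=e] sol \<open>e > 0\<close> \<open>T \<noteq> 0\<close>
      eventually_neq_nhds[where f="\<lambda>z. L * T * z + T" and a=0 and c=0]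
    by (auto intro: eventually_conj continuous_intros)
  then obtain R where "R > 0" and R: "\<And>z. z \<in> ball 0 R \<Longrightarrow>
      norm z < e \<and> stationary_lhs L T S z = 0 \<and> L * T * z + T \<noteq> 0"
    unfolding eventually_nhds_metric by (auto simp: dist_commute)
  have hol: "S holomorphic_on ball 0 R"
    using \<open>S holomorphic_on ball 0 e\<close> R by (auto intro: holomorphic_on_subset)
  show ?thesis
  proof (cases "\<forall>z\<in>ball 0 R. S z = 0")
    case True
    then have "\<forall>\<^sub>F z in nhds 0. S z = 0"
      using eventually_nhds_in_open[of "ball 0 R" 0] \<open>R > 0\<close> by (auto elim: eventually_mono)
    then show ?thesis ..
  next
    case False
    then obtain \<beta> where "\<beta> \<in> ball 0 R" "S \<beta> \<noteq> 0" by blast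
    moreover have "0 \<in> ball 0 R" using \<open>R > 0\<close> by simp
    ultimately have "\<forall>\<^sub>F z in at 0. S z \<noteq> 0 \<and> z \<in> ball 0 R"
      using non_zero_neighbour_alt[OF hol open_ball connected_ball] by blast
    then obtain r where "r > 0" and r: "\<And>z. z \<noteq> 0 \<Longrightarrow> dist z 0 < r \<Longrightarrow> S z \<noteq> 0 \<and> z \<in> ball 0 R"
      unfolding eventually_at by auto
    define r' where "r' = min r R"
    have "S z = (L * T * z + 1) / (L * T * z + T)" if "z \<noteq> 0" "dist z 0 < r'" for z
    proof -
      have "first_integral L T S z = 0"
        using that r R by (intro first_integral_eq_0_on_ball[of S r'])
          (auto simp: r'_def dist_norm intro: holomorphic_on_subset[OF hol])
      moreover have "L * T * z + T \<noteq> 0" using that R by (simp add: r'_def dist_norm)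
      ultimately show ?thesis using first_integral_eq_0_iff \<open>z \<noteq> 0\<close> by blast
    qed
    then have "\<forall>\<^sub>F z in at 0. S z = (L * T * z + 1) / (L * T * z + T)"
      unfolding eventually_at using \<open>r > 0\<close> \<open>R > 0\<close> by (intro exI[of _ r']) (simp add: r'_def)
    then have "\<forall>\<^sub>F z in nhds 0. S z = (L * T * z + 1) / (L * T * z + T)"
      using analytic_at_imp_isCont[OF an] \<open>T \<noteq> 0\<close>
      by (intro isCont_eventually_eq_nhds) (auto intro!: continuous_intros)
    then show ?thesis ..
  qed
qed

lemma stationary_lhs_cong:
  assumes "\<forall>\<^sub>F w in nhds z. S w = G w"
  shows "stationary_lhs L T S z = stationary_lhs L T G z"
proof -
  have "deriv (\<lambda>w. (S w)\<^sup>2) z = deriv (\<lambda>w. (G w)\<^sup>2) z"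
    using assms by (intro deriv_cong_ev) (auto elim: eventually_mono)
  then show ?thesis using eventually_nhds_x_imp_x[OF assms] by (simp add: stationary_lhs_def)
qed

text \<open>The first integral of the rational function vanishes identically, hence so does its derivative.\<close>
lemma stationary_lhs_rational_solution:
  fixes L T :: complex
  assumes "T \<noteq> 0"
  shows "\<forall>\<^sub>F z in nhds 0. stationary_lhs L T (\<lambda>z. (L * T * z + 1) / (L * T * z + T)) z = 0"
proof -
  define S0 where "S0 z = (L * T * z + 1) / (L * T * z + T)" for z
  define U where "U = {z. L * T * z + T \<noteq> 0}"
  have "open U" unfolding U_def by (intro open_Collect_neq continuous_intros)
  have first_integral_0: "0 = first_integral L T S0 w" if "w \<in> U" for w
    using that by (simp add: first_integral_def S0_def U_def field_simps)
  have "stationary_lhs L T S0 z = 0" if "z \<in> U" for z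
  proof -
    have "S0 holomorphic_on U" unfolding S0_def U_def by (intro holomorphic_intros) auto
    then have dS0: "(S0 has_field_derivative deriv S0 z) (at z)"
      using \<open>open U\<close> that by (rule holomorphic_derivI)
    have "(first_integral L T S0 has_field_derivative 0) (at z)"
      by (rule has_field_derivative_transform_within_open[OF DERIV_const \<open>open U\<close> that first_integral_0])
    with first_integral_has_field_derivative[OF dS0, of L T] stationary_lhs_eq[OF dS0, of L T]
    show ?thesis using DERIV_unique by fastforce
  qed
  moreover have "\<forall>\<^sub>F z in nhds 0. z \<in> U"
    using \<open>open U\<close> assms by (intro eventually_nhds_in_open) (simp_all add: U_def)
  ultimately show ?thesis unfolding S0_def by (auto elim: eventually_mono)
qed

lemma stationary_equation_solutions:
  fixes L T :: complex
  assumes "T \<noteq> 0"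
  shows "(S analytic_on {0} \<and> (\<forall>\<^sub>F z in nhds 0. stationary_lhs L T S z = 0)) \<longleftrightarrow>
    (\<forall>\<^sub>F z in nhds 0. S z = 0) \<or> (\<forall>\<^sub>F z in nhds 0. S z = (L * T * z + 1) / (L * T * z + T))"
proof
  assume "S analytic_on {0} \<and> (\<forall>\<^sub>F z in nhds 0. stationary_lhs L T S z = 0)"
  then show "(\<forall>\<^sub>F z in nhds 0. S z = 0) \<or> (\<forall>\<^sub>F z in nhds 0. S z = (L * T * z + 1) / (L * T * z + T))"
    using stationary_solution_cases[OF assms] by (elim conjE)
next
  assume solution: "(\<forall>\<^sub>F z in nhds 0. S z = 0) \<or> (\<forall>\<^sub>F z in nhds 0. S z = (L * T * z + 1) / (L * T * z + T))"
  obtain G where SG: "\<forall>\<^sub>F z in nhds 0. S z = G z" and "G analytic_on {0}"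
    and G: "\<forall>\<^sub>F z in nhds 0. stationary_lhs L T G z = 0"
  proof (cases "\<forall>\<^sub>F z in nhds 0. S z = 0")
    case True
    then show ?thesis by (intro that[of "\<lambda>_. 0"]) (simp_all add: stationary_lhs_def)
  next
    case False
    with solution show ?thesis
      using stationary_lhs_rational_solution[OF assms, of L] assms
      by (intro that[of "\<lambda>z. (L * T * z + 1) / (L * T * z + T)"]) (auto intro!: analytic_intros)
  qed
  have "S analytic_on {0}" using analytic_at_cong[OF SG refl] \<open>G analytic_on {0}\<close> by blast
  moreover have "\<forall>\<^sub>F z in nhds 0. stationary_lhs L T S z = 0"
    using eventually_eventually[THEN iffD2, OF SG] G
    by eventually_elim (simp add: stationary_lhs_cong)
  ultimately show "S analytic_on {0} \<and> (\<forall>\<^sub>F z in nhds 0. stationary_lhs L T S z = 0)" ..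
qed

theorem mainTheorem2:
  fixes lam theta :: real and S :: "complex \<Rightarrow> complex"
  assumes "lam > 0" and "0 < theta" and "theta \<le> 1" and "0 < lam * theta" and "lam * theta \<le> 1"
  shows
   "((S analytic_on {0} \<and>
      (\<forall>\<^sub>F z in nhds 0.
         (2 * of_real (lam * theta) * z + 1) * S z
         - of_real theta * (1 + 2 * of_real lam * z) * (S z)\<^sup>2
         - of_real theta * z * (1 + of_real lam * z) / 2 * deriv (\<lambda>w. (S w)\<^sup>2) z = 0))
     \<longleftrightarrow>
     ((\<forall>\<^sub>F z in nhds 0. S z = 0) \<or>
      (\<forall>\<^sub>F z in nhds 0. S z = (of_real (lam * theta) * z + 1) / (of_real (lam * theta) * z + of_real theta))))
   \<and>
   (\<forall>(st :: 'a::real_algebra_1 \<Rightarrow> 'a) tau Q.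
      star_prob_space st tau \<and> orth_proj st Q \<and> tau Q = theta \<longrightarrow>
      (\<exists>SQ. is_S_transform (\<lambda>n. complex_of_real (tau (Q ^ n))) SQ) \<and>
      (\<forall>SQ. is_S_transform (\<lambda>n. complex_of_real (tau (Q ^ n))) SQ \<longrightarrow>
         (\<forall>\<^sub>F z in nhds 0. (of_real (lam * theta) * z + 1) / (of_real (lam * theta) * z + of_real theta)
                            = SQ (of_real (lam * theta) * z))))
   \<and>
   (\<forall>(st :: 'a::real_algebra_1 \<Rightarrow> 'a) tau P Q.
      star_prob_space st tau \<and> orth_proj st P \<and> orth_proj st Q \<and> free_pair tau P Q \<and>
      tau P = lam * theta \<and> tau Q = theta \<longrightarrow>
      (\<exists>SPQP. is_S_transform (\<lambda>n. if n = 0 then 1 else complex_of_real (tau ((P * Q * P) ^ n) / tau P)) SPQP) \<and>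
      (\<forall>SPQP. is_S_transform (\<lambda>n. if n = 0 then 1 else complex_of_real (tau ((P * Q * P) ^ n) / tau P)) SPQP \<longrightarrow>
         (\<forall>\<^sub>F z in nhds 0. SPQP z = (of_real (lam * theta) * z + 1) / (of_real (lam * theta) * z + of_real theta))))"
proof -
  have "(of_real theta :: complex) \<noteq> 0" using assms(2) by simp
  note stationary = stationary_equation_solutions[OF this, of S "of_real lam", unfolded stationary_lhs_def]
  have dilate: "filterlim (\<lambda>z. of_real (lam * theta) * z) (nhds 0) (nhds (0::complex))"
    using tendsto_mult_left[OF filterlim_ident, of "of_real (lam * theta)" "0::complex"] by simp
  show ?thesis
  proof (intro conjI allI impI, goal_cases)
    case 1
    show ?case unfolding of_real_mult by (rule stationary)
  next
    case (2 st tau Q)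
    then show ?case using S_transform_projection[of st tau Q theta] assms(2) by blast
  next
    case (3 st tau Q SQ)
    then have "\<forall>\<^sub>F w in nhds 0. SQ w = (1 + w) / (of_real theta + w)"
      using S_transform_projection[of st tau Q theta] assms(2) by blast
    from filterlim_iff[THEN iffD1, OF dilate, rule_format, OF this]
    show ?case by eventually_elim (simp add: add_ac)
  next
    case (4 st tau P Q)
    then show ?case using S_transform_compressed_PQP[of "lam * theta" theta st tau P Q] assms by blast
  next
    case (5 st tau P Q SPQP)
    then show ?case using S_transform_compressed_PQP[of "lam * theta" theta st tau P Q] assms by blast
  qed
qed

end
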